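(* For every finite graph $G$ with maximum degree $\Delta\ge 1$, $\chi_s(G)\le 2\sqrt{2}\,\Delta^{3/2}+\Delta$.
   Context: A star coloring of a graph is a proper vertex-coloring in which every path on four vertices contains at least three colors (equivalently, any two color classes induce a forest of stars). The star chromatic number $\chi_s(G)$ is the minimum number of colors in a star coloring of $G$. *)

theory Defs
  imports Complex_Main
begin

definition fin_graph :: "'a set \<Rightarrow> ('a \<Rightarrow> 'a \<Rightarrow> bool) \<Rightarrow> bool" where
  "fin_graph V E \<longleftrightarrow> finite V \<and> (\<forall>u v. E u v \<longrightarrow> u \<in> V \<and> v \<in> V)
     \<and> (\<forall>u v. E u v \<longrightarrow> E v u) \<and> (\<forall>v. \<not> E v v)"

definition degree :: "'a set \<Rightarrow> ('a \<Rightarrow> 'a \<Rightarrow> bool) \<Rightarrow> 'a \<Rightarrow> nat" where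
  "degree V E v = card {u \<in> V. E v u}"

definition max_degree :: "'a set \<Rightarrow> ('a \<Rightarrow> 'a \<Rightarrow> bool) \<Rightarrow> nat" where
  "max_degree V E = Max (insert 0 (degree V E ` V))"

definition star_coloring :: "'a set \<Rightarrow> ('a \<Rightarrow> 'a \<Rightarrow> bool) \<Rightarrow> nat \<Rightarrow> ('a \<Rightarrow> nat) \<Rightarrow> bool" where
  "star_coloring V E k c \<longleftrightarrow>
     (\<forall>v\<in>V. c v < k)
     \<and> (\<forall>u v. E u v \<longrightarrow> c u \<noteq> c v)
     \<and> (\<forall>a b d e. distinct [a, b, d, e] \<and> E a b \<and> E b d \<and> E d e
          \<longrightarrow> card {c a, c b, c d, c e} \<ge> 3)"

definition star_chromatic_number :: "'a set \<Rightarrow> ('a \<Rightarrow> 'a \<Rightarrow> bool) \<Rightarrow> nat" where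
  "star_chromatic_number V E = (LEAST k. \<exists>c. star_coloring V E k c)"

end

theory Submission imports Defs "HOL-Library.FuncSet" begin

text \<open>Rosenfeld-style counting. Let \<open>C(S)\<close> be the number of star colourings of \<open>G[S]\<close>
  with \<open>k\<close> colours. One shows \<open>C(S + v) \<ge> \<beta> C(S)\<close> by induction on \<open>|S|\<close>. Colouring \<open>v\<close>
  differently from its neighbours in \<open>S\<close> gives at least \<open>(k - \<Delta>) C(S)\<close> proper extensions.
  An extension that is not a star colouring contains a bicoloured path on four vertices
  through \<open>v\<close>; it is determined by that path (at most \<open>2\<Delta>(\<Delta>-1)\<^sup>2\<close> choices) and by its
  restriction to \<open>S\<close> minus one vertex of the path (at most \<open>C(S)/\<beta>\<close> choices, by induction).
  Hence \<open>C(S + v) \<ge> (k - \<Delta> - 2\<Delta>(\<Delta>-1)\<^sup>2/\<beta>) C(S) \<ge> \<beta> C(S)\<close>, and \<open>C(V) > 0\<close>. The choice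
  \<open>\<beta> = \<surd>2 \<Delta>\<^bsup>3/2\<^esup>\<close> makes the last inequality hold for \<open>k = \<lfloor>2\<surd>2 \<Delta>\<^bsup>3/2\<^esup> + \<Delta>\<rfloor>\<close>.\<close>

definition star_colorings :: "('a \<Rightarrow> 'a \<Rightarrow> bool) \<Rightarrow> nat \<Rightarrow> 'a set \<Rightarrow> ('a \<Rightarrow> nat) set" where
  "star_colorings E k S = {c \<in> S \<rightarrow>\<^sub>E {..<k}. (\<forall>u\<in>S. \<forall>w\<in>S. E u w \<longrightarrow> c u \<noteq> c w) \<and>
     (\<forall>a\<in>S. \<forall>b\<in>S. \<forall>d\<in>S. \<forall>e\<in>S.
        distinct [a, b, d, e] \<and> E a b \<and> E b d \<and> E d e \<longrightarrow> \<not> (c a = c d \<and> c b = c e))}"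

lemma restrict_in_star_colorings:
  "T \<subseteq> S \<Longrightarrow> c \<in> star_colorings E k S \<Longrightarrow> restrict c T \<in> star_colorings E k T"
  unfolding star_colorings_def by (simp add: PiE_iff subset_iff) blast

lemma finite_star_colorings: "finite S \<Longrightarrow> finite (star_colorings E k S)"
  unfolding star_colorings_def
  by (rule finite_subset[OF _ finite_PiE[of S "\<lambda>_. {..<k}"]]) auto

lemma star_colorings_empty: "(\<lambda>_. undefined) \<in> star_colorings E k {}"
  unfolding star_colorings_def by auto

lemma star_coloring_if_in_star_colorings:
  assumes G: "fin_graph V E" and c: "c \<in> star_colorings E k V"
  shows "star_coloring V E k c"
  unfolding star_coloring_def
proof (intro conjI allI impI)
  have EV: "E u w \<Longrightarrow> u \<in> V \<and> w \<in> V" for u w using G unfolding fin_graph_def by auto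
  have proper: "\<forall>u\<in>V. \<forall>w\<in>V. E u w \<longrightarrow> c u \<noteq> c w"
    and star: "\<forall>a\<in>V. \<forall>b\<in>V. \<forall>d\<in>V. \<forall>e\<in>V. distinct [a, b, d, e] \<and> E a b \<and> E b d \<and> E d e
                 \<longrightarrow> \<not> (c a = c d \<and> c b = c e)"
    using c unfolding star_colorings_def by blast+
  show "\<forall>v\<in>V. c v < k" using c unfolding star_colorings_def by auto
  show "c u \<noteq> c v" if "E u v" for u v using proper EV that by blast
  fix a b d e assume path: "distinct [a, b, d, e] \<and> E a b \<and> E b d \<and> E d e"
  then have "a \<in> V" "b \<in> V" "d \<in> V" "e \<in> V" using EV by auto
  then have "c a \<noteq> c b" "c b \<noteq> c d" "c d \<noteq> c e" "\<not> (c a = c d \<and> c b = c e)"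
    using proper star path by blast+
  then have "card {c a, c b, c d} = 3 \<or> card {c b, c d, c e} = 3" by auto
  moreover have "card {c a, c b, c d} \<le> card {c a, c b, c d, c e}"
    and "card {c b, c d, c e} \<le> card {c a, c b, c d, c e}" by (intro card_mono; auto)+
  ultimately show "3 \<le> card {c a, c b, c d, c e}" by linarith
qed

lemma card_Sigma_Sigma_le:
  assumes "finite X" "card X \<le> D"
    and "\<And>x. x \<in> X \<Longrightarrow> finite (Y x) \<and> card (Y x) \<le> m"
    and "\<And>x y. x \<in> X \<Longrightarrow> y \<in> Y x \<Longrightarrow> finite (Z x y) \<and> card (Z x y) \<le> m"
  shows "card (SIGMA x:X. SIGMA y:Y x. Z x y) \<le> D * m * m"
proof -
  have "card (SIGMA x:X. SIGMA y:Y x. Z x y) = (\<Sum>x\<in>X. \<Sum>y\<in>Y x. card (Z x y))"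
    using assms by simp
  also have "\<dots> \<le> (\<Sum>x\<in>X. \<Sum>y\<in>Y x. m)"
    using assms by (intro sum_mono) auto
  also have "\<dots> \<le> (\<Sum>x\<in>X. m * m)"
    using assms by (intro sum_mono) (auto intro: mult_right_mono)
  also have "\<dots> \<le> D * m * m" using assms by (simp add: mult_right_mono)
  finally show ?thesis .
qed

lemma card_UN_le_card_mult:
  assumes "finite P" "\<And>p. p \<in> P \<Longrightarrow> finite (B p) \<and> real (card (B p)) \<le> M"
  shows "real (card (\<Union>p\<in>P. B p)) \<le> real (card P) * M"
proof -
  have "card (\<Union>p\<in>P. B p) \<le> (\<Sum>p\<in>P. card (B p))"
    using assms(1) by (rule card_UN_le)
  then have "real (card (\<Union>p\<in>P. B p)) \<le> (\<Sum>p\<in>P. real (card (B p)))"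
    by (metis of_nat_le_iff of_nat_sum)
  also have "\<dots> \<le> (\<Sum>p\<in>P. M)"
    using assms(2) by (intro sum_mono) auto
  finally show ?thesis by simp
qed

lemma sqrt2_cube_bound:
  fixes s :: real assumes s: "s \<ge> 1"
  shows "sqrt 2 * s^3 + 2 * (s^2 * (s^2 - 1)^2) / (sqrt 2 * s^3) \<le> 2 * sqrt 2 * s^3 - 1"
proof -
  define r where "r = sqrt (2::real)"
  have r1: "r \<ge> 1" and r2: "r * r = 2" unfolding r_def by simp_all
  have "s * 1 \<le> s * s" using s by (intro mult_left_mono) auto
  then have "s \<le> 2 * s^2 - 1" using s unfolding power2_eq_square by linarith
  then have "1 * s \<le> r * (2 * s^2 - 1)"
    using r1 s by (intro mult_mono) auto
  then have "r * (s^2 - 1)^2 \<le> (r * s^3 - 1) * s"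
    by (simp add: algebra_simps power2_eq_square power3_eq_cube)
  then have "r * (s^2 - 1)^2 / s \<le> r * s^3 - 1" using s by (simp add: divide_le_eq)
  moreover have "2 * (s^2 * (s^2 - 1)^2) / (r * s^3) = r * (s^2 - 1)^2 / s"
    using s r1 by (simp flip: r2 add: field_simps power2_eq_square power3_eq_cube)
  ultimately show ?thesis unfolding r_def by simp
qed

lemma powr_three_halves: "(x::real) \<ge> 0 \<Longrightarrow> x powr (3/2) = sqrt x ^ 3"
proof -
  assume x: "x \<ge> 0"
  have "x powr (3/2) = x powr (1 + 1/2)" by simp
  also have "\<dots> = x powr 1 * x powr (1/2)" by (rule powr_add)
  also have "\<dots> = x * sqrt x" using x by (cases "x = 0") (simp_all add: powr_half_sqrt)
  also have "\<dots> = sqrt x ^ 3" using x by (simp add: power3_eq_cube)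
  finally show ?thesis .
qed

lemma degree_le_max_degree:
  "fin_graph V E \<Longrightarrow> x \<in> V \<Longrightarrow> card {u \<in> V. E x u} \<le> max_degree V E"
  unfolding max_degree_def degree_def fin_graph_def by (intro Max_ge) auto

locale bounded_degree_graph =
  fixes V :: "'a set" and E :: "'a \<Rightarrow> 'a \<Rightarrow> bool" and \<Delta> :: nat
  assumes graph: "fin_graph V E"
    and degree_le: "\<And>x. x \<in> V \<Longrightarrow> card {u \<in> V. E x u} \<le> \<Delta>"
begin

definition nbhd :: "'a \<Rightarrow> 'a set" where "nbhd x = {u \<in> V. E x u}"

lemma finite_V: "finite V" using graph unfolding fin_graph_def by auto
lemma edge_in_V: "E u w \<Longrightarrow> u \<in> V \<and> w \<in> V" using graph unfolding fin_graph_def by auto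
lemma edge_sym: "E u w \<Longrightarrow> E w u" using graph unfolding fin_graph_def by auto
lemma edge_irrefl: "\<not> E u u" using graph unfolding fin_graph_def by auto

lemma finite_nbhd: "finite (nbhd x)" unfolding nbhd_def using finite_V by auto
lemma in_nbhd_iff: "y \<in> nbhd x \<longleftrightarrow> E x y" unfolding nbhd_def using edge_in_V by auto

lemma card_nbhd_le: "card (nbhd x) \<le> \<Delta>"
proof (cases "x \<in> V")
  case False
  then have "nbhd x = {}" using edge_in_V unfolding nbhd_def by auto
  then show ?thesis by simp
qed (simp add: degree_le nbhd_def)

lemma card_nbhd_minus_one_le: "card (nbhd x) - 1 \<le> \<Delta> - 1"
  using card_nbhd_le by (rule diff_le_mono)

definition extensions :: "nat \<Rightarrow> 'a \<Rightarrow> 'a set \<Rightarrow> ('a \<Rightarrow> nat) set" where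
  "extensions k v S = (\<lambda>(c, x). c(v := x)) `
     (SIGMA c:star_colorings E k S. {..<k} - c ` (nbhd v \<inter> S))"

text \<open>Paths \<open>v b d e\<close> and \<open>a v d e\<close> with the other three vertices in \<open>S\<close>. A colouring
  bicoloured on such a path is determined by its restriction to \<open>S - {b}\<close>, resp. \<open>S - {a}\<close>:
  the missing colours are \<open>c b = c e\<close> and \<open>c v = c d\<close>, resp. \<open>c a = c d\<close> and \<open>c v = c e\<close>.\<close>
definition end_paths :: "'a \<Rightarrow> 'a set \<Rightarrow> ('a \<times> 'a \<times> 'a) set" where
  "end_paths v S = {(b, d, e). b \<in> S \<and> d \<in> S \<and> e \<in> S \<and> E v b \<and> E b d \<and> E d e \<and> e \<noteq> b}"

definition inner_paths :: "'a \<Rightarrow> 'a set \<Rightarrow> ('a \<times> 'a \<times> 'a) set" where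
  "inner_paths v S = {(a, d, e). a \<in> S \<and> d \<in> S \<and> e \<in> S \<and> E a v \<and> E v d \<and> E d e
                        \<and> a \<noteq> d \<and> e \<noteq> a}"

definition end_recolorings :: "nat \<Rightarrow> 'a \<Rightarrow> 'a set \<Rightarrow> ('a \<Rightarrow> nat) set" where
  "end_recolorings k v S = (\<Union>(b, d, e)\<in>end_paths v S.
     (\<lambda>c. c(v := c d, b := c e)) ` star_colorings E k (S - {b}))"

definition inner_recolorings :: "nat \<Rightarrow> 'a \<Rightarrow> 'a set \<Rightarrow> ('a \<Rightarrow> nat) set" where
  "inner_recolorings k v S = (\<Union>(a, d, e)\<in>inner_paths v S.
     (\<lambda>c. c(a := c d, v := c e)) ` star_colorings E k (S - {a}))"

lemma extension_colors_properly:
  assumes "v \<notin> S" "c \<in> star_colorings E k S" "x \<in> {..<k} - c ` (nbhd v \<inter> S)"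
  shows "c(v := x) \<in> insert v S \<rightarrow>\<^sub>E {..<k}"
    and "\<forall>u\<in>insert v S. \<forall>w\<in>insert v S. E u w \<longrightarrow> (c(v := x)) u \<noteq> (c(v := x)) w"
proof -
  have c: "c \<in> S \<rightarrow>\<^sub>E {..<k}" "\<forall>u\<in>S. \<forall>w\<in>S. E u w \<longrightarrow> c u \<noteq> c w"
    using assms(2) unfolding star_colorings_def by auto
  then show "c(v := x) \<in> insert v S \<rightarrow>\<^sub>E {..<k}"
    using assms(3) by (auto simp: PiE_iff extensional_def)
  have new: "x \<noteq> c w" if "w \<in> S" "E v w" for w
    using assms(3) that in_nbhd_iff by auto
  show "\<forall>u\<in>insert v S. \<forall>w\<in>insert v S. E u w \<longrightarrow> (c(v := x)) u \<noteq> (c(v := x)) w"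
  proof (intro ballI impI)
    fix u w assume "u \<in> insert v S" "w \<in> insert v S" "E u w"
    then consider "u = v" "w \<in> S" "E v w" | "w = v" "u \<in> S" "E v u" | "u \<in> S" "w \<in> S"
      using edge_irrefl edge_sym by blast
    then show "(c(v := x)) u \<noteq> (c(v := x)) w"
      by cases (use new c(2) \<open>E u w\<close> assms(1) in \<open>auto\<close>)
  qed
qed

lemma in_end_recolorings:
  assumes p: "(b, d, e) \<in> end_paths v S" and "v \<notin> S"
    and "c \<in> extensional (insert v S)"
    and "restrict c (S - {b}) \<in> star_colorings E k (S - {b})"
    and "c v = c d" "c b = c e"
  shows "c \<in> end_recolorings k v S"
proof -
  let ?r = "restrict c (S - {b})"
  have "b \<in> S" "d \<in> S" "e \<in> S" "e \<noteq> b" "d \<noteq> b"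
    using p edge_irrefl unfolding end_paths_def by auto
  then have "c = ?r(v := ?r d, b := ?r e)"
    using assms(2,3,5,6) by (intro ext) (auto simp: extensional_def)
  then show ?thesis using assms(4) p unfolding end_recolorings_def by blast
qed

lemma in_inner_recolorings:
  assumes p: "(a, d, e) \<in> inner_paths v S" and "v \<notin> S"
    and "c \<in> extensional (insert v S)"
    and "restrict c (S - {a}) \<in> star_colorings E k (S - {a})"
    and "c a = c d" "c v = c e"
  shows "c \<in> inner_recolorings k v S"
proof -
  let ?r = "restrict c (S - {a})"
  have "a \<in> S" "d \<in> S" "e \<in> S" "e \<noteq> a" "d \<noteq> a"
    using p unfolding inner_paths_def by auto
  then have "c = ?r(a := ?r d, v := ?r e)"
    using assms(2,3,5,6) by (intro ext) (auto simp: extensional_def)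
  then show ?thesis using assms(4) p unfolding inner_recolorings_def by blast
qed

lemma extensions_subset:
  assumes v: "v \<notin> S"
  shows "extensions k v S
           \<subseteq> star_colorings E k (insert v S) \<union> end_recolorings k v S \<union> inner_recolorings k v S"
proof
  fix \<psi> assume "\<psi> \<in> extensions k v S"
  then obtain c x where c: "c \<in> star_colorings E k S" and x: "x \<in> {..<k} - c ` (nbhd v \<inter> S)"
    and \<psi>: "\<psi> = c(v := x)"
    unfolding extensions_def by auto
  have \<psi>_PiE: "\<psi> \<in> insert v S \<rightarrow>\<^sub>E {..<k}"
    and \<psi>_proper: "\<forall>u\<in>insert v S. \<forall>w\<in>insert v S. E u w \<longrightarrow> \<psi> u \<noteq> \<psi> w"
    using extension_colors_properly[OF v c x] unfolding \<psi> by blast+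
  have \<psi>_ext: "\<psi> \<in> extensional (insert v S)" using \<psi>_PiE by (simp add: PiE_iff)
  have \<psi>_restrict: "restrict \<psi> (S - {b}) \<in> star_colorings E k (S - {b})" for b
  proof -
    have "restrict \<psi> (S - {b}) = restrict c (S - {b})" using v unfolding \<psi> by auto
    then show ?thesis using restrict_in_star_colorings[OF _ c] by auto
  qed
  show "\<psi> \<in> star_colorings E k (insert v S) \<union> end_recolorings k v S \<union> inner_recolorings k v S"
  proof (cases "\<psi> \<in> star_colorings E k (insert v S)")
    case False
    then obtain a b d e where in_S: "a \<in> insert v S" "b \<in> insert v S" "d \<in> insert v S" "e \<in> insert v S"
      and path: "distinct [a, b, d, e]" "E a b" "E b d" "E d e"
      and bicoloured: "\<psi> a = \<psi> d" "\<psi> b = \<psi> e"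
      using \<psi>_PiE \<psi>_proper unfolding star_colorings_def by blast
    have c_star: "\<not> (c a = c d \<and> c b = c e)" if "a \<in> S" "b \<in> S" "d \<in> S" "e \<in> S"
      using c that path unfolding star_colorings_def by blast
    consider "a = v" | "b = v" | "d = v" | "e = v" | "a \<in> S" "b \<in> S" "d \<in> S" "e \<in> S"
      using in_S by blast
    then show ?thesis
    proof cases
      case 1
      then have "(b, d, e) \<in> end_paths v S" using in_S path unfolding end_paths_def by auto
      then show ?thesis using in_end_recolorings[OF _ v \<psi>_ext \<psi>_restrict] bicoloured 1 by blast
    next
      case 2
      then have "(a, d, e) \<in> inner_paths v S" using in_S path unfolding inner_paths_def by auto
      then show ?thesis using in_inner_recolorings[OF _ v \<psi>_ext \<psi>_restrict] bicoloured 2 by blast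
    next
      case 3
      then have "(e, b, a) \<in> inner_paths v S"
        using in_S path edge_sym unfolding inner_paths_def by auto
      then show ?thesis
        using in_inner_recolorings[OF _ v \<psi>_ext \<psi>_restrict] bicoloured 3 by (metis UnI2)
    next
      case 4
      then have "(d, b, a) \<in> end_paths v S"
        using in_S path edge_sym unfolding end_paths_def by auto
      then show ?thesis
        using in_end_recolorings[OF _ v \<psi>_ext \<psi>_restrict] bicoloured 4 by (metis UnI1 UnI2)
    next
      case 5
      then have "v \<notin> {a, b, d, e}" using v by auto
      then show ?thesis using c_star[OF 5] bicoloured unfolding \<psi> by auto
    qed
  qed simp
qed

lemma card_extensions_ge:
  assumes "finite S" "v \<notin> S"
  shows "(real k - real \<Delta>) * real (card (star_colorings E k S)) \<le> real (card (extensions k v S))"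
proof -
  let ?C = "star_colorings E k S" and ?A = "\<lambda>c. {..<k} - c ` (nbhd v \<inter> S)"
  have "inj_on (\<lambda>(c, x). c(v := x)) (SIGMA c:?C. ?A c)"
  proof (rule inj_onI, clarsimp)
    fix c c' x x' assume "c \<in> ?C" "c' \<in> ?C" and eq: "c(v := x) = c'(v := x')"
    then have "c v = c' v" using assms(2) unfolding star_colorings_def by (auto simp: PiE_def extensional_def)
    then show "c = c' \<and> x = x'" using eq by (metis fun_upd_triv fun_upd_upd fun_upd_same)
  qed
  then have "card (extensions k v S) = (\<Sum>c\<in>?C. card (?A c))"
    unfolding extensions_def
    using finite_star_colorings[OF assms(1)] by (simp add: card_image)
  moreover have "real k - real \<Delta> \<le> real (card (?A c))" for c
  proof -
    have "card (c ` (nbhd v \<inter> S)) \<le> \<Delta>"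
      using card_image_le card_mono card_nbhd_le finite_nbhd
      by (metis Int_lower1 finite_Int order_trans)
    moreover have "k - card (c ` (nbhd v \<inter> S)) \<le> card (?A c)"
      using diff_card_le_card_Diff[of "c ` (nbhd v \<inter> S)" "{..<k}"] finite_nbhd by auto
    ultimately show ?thesis by linarith
  qed
  then have "(\<Sum>c\<in>?C. real k - real \<Delta>) \<le> (\<Sum>c\<in>?C. real (card (?A c)))"
    by (rule sum_mono)
  ultimately show ?thesis by (simp add: mult.commute)
qed

lemma
  assumes "v \<notin> S"
  shows finite_end_paths: "finite (end_paths v S)"
    and card_end_paths_le: "card (end_paths v S) \<le> \<Delta> * (\<Delta> - 1) * (\<Delta> - 1)"
proof -
  let ?P = "SIGMA b:nbhd v. SIGMA d:nbhd b - {v}. nbhd d - {b}"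
  have sub: "end_paths v S \<subseteq> ?P"
    unfolding end_paths_def using assms in_nbhd_iff edge_sym by auto
  have fin: "finite ?P" by (simp add: finite_nbhd)
  then show "finite (end_paths v S)" using sub by (rule finite_subset[rotated])
  have "card ?P \<le> \<Delta> * (\<Delta> - 1) * (\<Delta> - 1)"
    by (rule card_Sigma_Sigma_le)
       (use card_nbhd_le card_nbhd_minus_one_le in_nbhd_iff edge_sym in \<open>auto simp: finite_nbhd\<close>)
  then show "card (end_paths v S) \<le> \<Delta> * (\<Delta> - 1) * (\<Delta> - 1)"
    using card_mono[OF fin sub] by linarith
qed

lemma
  assumes "v \<notin> S"
  shows finite_inner_paths: "finite (inner_paths v S)"
    and card_inner_paths_le: "card (inner_paths v S) \<le> \<Delta> * (\<Delta> - 1) * (\<Delta> - 1)"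
proof -
  let ?P = "SIGMA a:nbhd v. SIGMA d:nbhd v - {a}. nbhd d - {v}"
  have sub: "inner_paths v S \<subseteq> ?P"
    unfolding inner_paths_def using assms in_nbhd_iff edge_sym by auto
  have fin: "finite ?P" by (simp add: finite_nbhd)
  then show "finite (inner_paths v S)" using sub by (rule finite_subset[rotated])
  have "card ?P \<le> \<Delta> * (\<Delta> - 1) * (\<Delta> - 1)"
    by (rule card_Sigma_Sigma_le)
       (use card_nbhd_le card_nbhd_minus_one_le in_nbhd_iff edge_sym in \<open>auto simp: finite_nbhd\<close>)
  then show "card (inner_paths v S) \<le> \<Delta> * (\<Delta> - 1) * (\<Delta> - 1)"
    using card_mono[OF fin sub] by linarith
qed

lemma card_recolor_image_le:
  assumes "finite S" "\<And>b. b \<in> S \<Longrightarrow> real (card (star_colorings E k (S - {b}))) \<le> M" "b \<in> S"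
  shows "finite (f ` star_colorings E k (S - {b}))
           \<and> real (card (f ` star_colorings E k (S - {b}))) \<le> M"
proof -
  have fin: "finite (star_colorings E k (S - {b}))" using assms(1) by (simp add: finite_star_colorings)
  then have "card (f ` star_colorings E k (S - {b})) \<le> card (star_colorings E k (S - {b}))"
    by (rule card_image_le)
  then show ?thesis using fin assms(2)[OF assms(3)] by (simp add: order_trans)
qed

lemma card_end_recolorings_le:
  assumes "finite S" "v \<notin> S" "0 \<le> M"
    and "\<And>b. b \<in> S \<Longrightarrow> real (card (star_colorings E k (S - {b}))) \<le> M"
  shows "real (card (end_recolorings k v S)) \<le> real (\<Delta> * (\<Delta> - 1) * (\<Delta> - 1)) * M"
proof -
  have "real (card (end_recolorings k v S)) \<le> real (card (end_paths v S)) * M"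
    unfolding end_recolorings_def
    by (rule card_UN_le_card_mult[OF finite_end_paths[OF assms(2)]])
       (auto simp: end_paths_def intro!: card_recolor_image_le[OF assms(1,4)])
  also have "\<dots> \<le> real (\<Delta> * (\<Delta> - 1) * (\<Delta> - 1)) * M"
    using card_end_paths_le[OF assms(2)] assms(3) by (intro mult_right_mono) 
      (simp only: of_nat_le_iff, auto)
  finally show ?thesis .
qed

lemma card_inner_recolorings_le:
  assumes "finite S" "v \<notin> S" "0 \<le> M"
    and "\<And>a. a \<in> S \<Longrightarrow> real (card (star_colorings E k (S - {a}))) \<le> M"
  shows "real (card (inner_recolorings k v S)) \<le> real (\<Delta> * (\<Delta> - 1) * (\<Delta> - 1)) * M"
proof -
  have "real (card (inner_recolorings k v S)) \<le> real (card (inner_paths v S)) * M"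
    unfolding inner_recolorings_def
    by (rule card_UN_le_card_mult[OF finite_inner_paths[OF assms(2)]])
       (auto simp: inner_paths_def intro!: card_recolor_image_le[OF assms(1,4)])
  also have "\<dots> \<le> real (\<Delta> * (\<Delta> - 1) * (\<Delta> - 1)) * M"
    using card_inner_paths_le[OF assms(2)] assms(3) by (intro mult_right_mono) 
      (simp only: of_nat_le_iff, auto)
  finally show ?thesis .
qed

lemma card_extensions_le:
  assumes "finite S" "v \<notin> S"
  shows "real (card (extensions k v S))
           \<le> real (card (star_colorings E k (insert v S)))
               + real (card (end_recolorings k v S)) + real (card (inner_recolorings k v S))"
proof -
  have "finite (end_recolorings k v S)"
    unfolding end_recolorings_def using finite_end_paths[OF assms(2)] assms(1)
    by (auto intro: finite_star_colorings)
  moreover have "finite (inner_recolorings k v S)"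
    unfolding inner_recolorings_def using finite_inner_paths[OF assms(2)] assms(1)
    by (auto intro: finite_star_colorings)
  ultimately have "card (extensions k v S) \<le> card (star_colorings E k (insert v S)
                     \<union> end_recolorings k v S \<union> inner_recolorings k v S)"
    using extensions_subset[OF assms(2)] assms(1) by (intro card_mono) (auto intro: finite_star_colorings)
  also have "\<dots> \<le> card (star_colorings E k (insert v S))
                  + card (end_recolorings k v S) + card (inner_recolorings k v S)"
    by (meson card_Un_le add_le_mono order_trans le_refl)
  finally show ?thesis by (metis of_nat_add of_nat_le_iff)
qed

end

locale star_counting = bounded_degree_graph +
  fixes k :: nat and \<beta> :: real
  assumes \<beta>_pos: "\<beta> > 0"
    and \<beta>_le: "\<beta> \<le> real k - real \<Delta> - 2 * real (\<Delta> * (\<Delta> - 1) * (\<Delta> - 1)) / \<beta>"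
begin

lemma card_star_colorings_insert_ge:
  "S \<subseteq> V \<Longrightarrow> v \<notin> S
     \<Longrightarrow> \<beta> * real (card (star_colorings E k S)) \<le> real (card (star_colorings E k (insert v S)))"
proof (induction "card S" arbitrary: S v rule: less_induct)
  case less
  have fin: "finite S" using less.prems finite_V finite_subset by blast
  define C where "C = real (card (star_colorings E k S))"
  define D where "D = real (\<Delta> * (\<Delta> - 1) * (\<Delta> - 1))"
  have smaller: "real (card (star_colorings E k (S - {b}))) \<le> C / \<beta>" if "b \<in> S" for b
  proof -
    have "\<beta> * real (card (star_colorings E k (S - {b})))
            \<le> real (card (star_colorings E k (insert b (S - {b}))))"
      using that less.prems card_Diff1_less[OF fin that] by (intro less.hyps) auto
    then show ?thesis using that \<beta>_pos unfolding C_def by (simp add: insert_absorb field_simps)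
  qed
  have C_div: "0 \<le> C / \<beta>" using \<beta>_pos unfolding C_def by simp
  have "(real k - real \<Delta>) * C \<le> real (card (extensions k v S))"
    unfolding C_def using fin less.prems(2) by (rule card_extensions_ge)
  also have "\<dots> \<le> real (card (star_colorings E k (insert v S)))
                  + real (card (end_recolorings k v S)) + real (card (inner_recolorings k v S))"
    using fin less.prems(2) by (rule card_extensions_le)
  also have "\<dots> \<le> real (card (star_colorings E k (insert v S))) + D * (C / \<beta>) + D * (C / \<beta>)"
    using card_end_recolorings_le[OF fin less.prems(2) C_div smaller]
      card_inner_recolorings_le[OF fin less.prems(2) C_div smaller]
    unfolding D_def by linarith
  finally have "(real k - real \<Delta>) * C
                  \<le> real (card (star_colorings E k (insert v S))) + D * (C / \<beta>) + D * (C / \<beta>)" .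
  moreover have "(real k - real \<Delta> - 2 * D / \<beta>) * C = (real k - real \<Delta>) * C - 2 * (D * (C / \<beta>))"
    by (simp add: algebra_simps)
  moreover have "\<beta> * C \<le> (real k - real \<Delta> - 2 * D / \<beta>) * C"
    using \<beta>_le unfolding C_def D_def by (intro mult_right_mono) auto
  ultimately have "\<beta> * C \<le> real (card (star_colorings E k (insert v S)))" by linarith
  then show ?case unfolding C_def .
qed

lemma star_colorings_nonempty:
  assumes "S \<subseteq> V" shows "star_colorings E k S \<noteq> {}"
  using finite_subset[OF assms finite_V] assms
proof (induction S rule: finite_subset_induct')
  case empty
  then show ?case using star_colorings_empty by blast
next
  case (insert a F)
  then have "finite (star_colorings E k F)"
    using finite_star_colorings finite_subset[OF _ finite_V] by blast
  then have "0 < \<beta> * real (card (star_colorings E k F))"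
    using \<beta>_pos insert by (simp add: card_gt_0_iff)
  also have "\<dots> \<le> real (card (star_colorings E k (insert a F)))"
    using insert by (intro card_star_colorings_insert_ge) auto
  finally show ?case by auto
qed

lemma star_chromatic_number_le: "star_chromatic_number V E \<le> k"
proof -
  obtain c where "c \<in> star_colorings E k V" using star_colorings_nonempty by blast
  then have "star_coloring V E k c" using graph by (intro star_coloring_if_in_star_colorings)
  then show ?thesis unfolding star_chromatic_number_def by (intro Least_le) blast
qed

end

theorem corollary11:
  fixes V :: "'a set" and E :: "'a \<Rightarrow> 'a \<Rightarrow> bool"
  assumes "fin_graph V E" and "max_degree V E \<ge> 1"
  shows "real (star_chromatic_number V E)
           \<le> 2 * sqrt 2 * real (max_degree V E) powr (3/2) + real (max_degree V E)"
proof -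
  define \<Delta> where "\<Delta> = max_degree V E"
  define s where "s = sqrt (real \<Delta>)"
  define X where "X = 2 * sqrt 2 * s^3 + s^2"
  define k where "k = nat \<lfloor>X\<rfloor>"
  have s: "s \<ge> 1" "s^2 = real \<Delta>" using assms(2) unfolding s_def \<Delta>_def by simp_all
  have bound: "2 * sqrt 2 * real \<Delta> powr (3/2) + real \<Delta> = X"
    using s unfolding X_def by (simp add: powr_three_halves s_def)
  have "X \<ge> 0" unfolding X_def using s(1) by simp
  then have k: "real k \<le> X" "X - 1 \<le> real k" unfolding k_def by linarith+
  have D: "real (\<Delta> * (\<Delta> - 1) * (\<Delta> - 1)) = s^2 * (s^2 - 1)^2"
    using assms(2) s(2) unfolding \<Delta>_def by (simp add: power2_eq_square)
  have "sqrt 2 * s^3 \<le> real k - real \<Delta> - 2 * real (\<Delta> * (\<Delta> - 1) * (\<Delta> - 1)) / (sqrt 2 * s^3)"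
    unfolding D using sqrt2_cube_bound[OF s(1)] k(2) s(2) unfolding X_def by linarith
  then interpret star_counting V E \<Delta> k "sqrt 2 * s^3"
    using assms(1) degree_le_max_degree s(1) unfolding \<Delta>_def by unfold_locales auto
  show ?thesis using star_chromatic_number_le k(1) bound unfolding \<Delta>_def by linarith
qed

end
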